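(* Let $\lambda_1,\lambda_2,\lambda_3,\lambda_4$ be non-negative integers with $\gcd(\lambda_1,\lambda_2,\lambda_3,\lambda_4)=1$, and let $h=\lambda_1+\lambda_2+\lambda_3+\lambda_4$. Then for every integer $\kappa\in\{2,\ldots,h-2\}$, $$\sum_{i=1}^4\left\{\frac{\kappa\lambda_i}{h}\right\}\in\{1,2,3\}.$$
   Context: For $q\in\mathbb{Q}$, $\lfloor q\rfloor=\max\{a\in\mathbb{Z}: a\le q\}$ and $\{q\}=q-\lfloor q\rfloor$ denotes the fractional part. *)

theory Defs
  imports Complex_Main
begin

end

theory Submission
  imports Defs
begin

text \<open>Put \<open>x\<^sub>i = \<kappa>\<lambda>\<^sub>i/h\<close>. Since \<open>\<Sum>\<^sub>i x\<^sub>i = \<kappa>\<close> is an integer, so is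
  \<open>S = \<Sum>\<^sub>i {x\<^sub>i}\<close>, and \<open>0 \<le> S < 4\<close>. If \<open>S = 0\<close>, every \<open>x\<^sub>i\<close> is an integer, i.e.
  \<open>h\<close> divides every \<open>\<kappa>\<lambda>\<^sub>i\<close> and hence \<open>\<kappa> gcd(\<lambda>\<^sub>1,\<dots>,\<lambda>\<^sub>4) = \<kappa>\<close>, which is impossible
  for \<open>0 < \<kappa> < h\<close>. The argument works for any number of weights.\<close>

lemma sum_list_frac:
  fixes xs :: "'a::floor_ceiling list"
  shows "(\<Sum>x\<leftarrow>xs. frac x) = sum_list xs - of_int (\<Sum>x\<leftarrow>xs. \<lfloor>x\<rfloor>)"
  by (induction xs) (simp_all add: frac_def)

lemma sum_list_frac_less_length:
  fixes xs :: "'a::floor_ceiling list"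
  assumes "xs \<noteq> []"
  shows "(\<Sum>x\<leftarrow>xs. frac x) < of_nat (length xs)"
proof -
  have "(\<Sum>x\<leftarrow>xs. frac x) < (\<Sum>x\<leftarrow>xs. 1)"
    using assms by (intro sum_list_strict_mono) (simp_all add: frac_lt_1)
  also have "\<dots> = of_nat (length xs)"
    by (induction xs) simp_all
  finally show ?thesis .
qed

lemma dvd_mult_Gcd:
  fixes c d :: "'a::semiring_Gcd"
  assumes "\<And>a. a \<in> A \<Longrightarrow> d dvd c * a"
  shows "d dvd c * Gcd A"
proof -
  have "d dvd Gcd ((*) c ` A)"
    using assms by (simp add: dvd_Gcd_iff)
  then show ?thesis
    by (simp add: Gcd_mult)
qed

lemma sum_list_scaled_weights:
  fixes ls :: "nat list" and k :: int
  assumes "h = sum_list ls" and "h > 0"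
  shows "(\<Sum>l\<leftarrow>ls. of_int k * of_nat l / of_nat h :: 'a::field_char_0) = of_int k"
proof -
  have "(\<Sum>l\<leftarrow>ls. of_int k * of_nat l / of_nat h :: 'a) = of_int k / of_nat h * of_nat (sum_list ls)"
    by (induction ls) (simp_all add: distrib_left)
  also have "\<dots> = of_int k"
    using \<open>h > 0\<close> by (simp flip: assms(1))
  finally show ?thesis .
qed

lemma dvd_if_scaled_weights_in_Ints:
  fixes ls :: "nat list" and k :: int
  assumes "Gcd (set ls) = 1" and "h > 0"
    and "\<And>l. l \<in> set ls \<Longrightarrow> (of_int k * of_nat l / of_nat h :: 'a::field_char_0) \<in> \<int>"
  shows "int h dvd k"
proof -
  have "int h dvd k * int l" if "l \<in> set ls" for l
  proof -
    have "(of_int (k * int l) / of_int (int h) :: 'a) \<in> \<int>"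
      using assms(3)[OF that] by simp
    then show ?thesis
      using \<open>h > 0\<close> by (simp only: of_int_div_of_int_in_Ints_iff) simp
  qed
  then have "int h dvd k * Gcd (int ` set ls)"
    by (intro dvd_mult_Gcd) auto
  then show ?thesis
    using assms(1) by simp
qed

theorem sum_list_frac_scaled_weights:
  fixes ls :: "nat list" and k :: int
  assumes "Gcd (set ls) = 1" and "h = sum_list ls" and "0 < k" and "k < int h"
  shows "\<exists>S. (\<Sum>l\<leftarrow>ls. frac (of_int k * of_nat l / of_nat h :: 'a::floor_ceiling)) = of_int S
           \<and> 0 < S \<and> S < int (length ls)"
proof -
  define x :: "nat \<Rightarrow> 'a" where "x l = of_int k * of_nat l / of_nat h" for l
  have "h > 0"
    using assms(3,4) by linarith
  then have "ls \<noteq> []"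
    using assms(2) by (cases ls) simp_all
  have "(\<Sum>l\<leftarrow>ls. x l) = of_int k"
    unfolding x_def using assms(2) \<open>h > 0\<close> by (rule sum_list_scaled_weights)
  define S where "S = k - (\<Sum>l\<leftarrow>ls. \<lfloor>x l\<rfloor>)"
  have frac_sum: "(\<Sum>l\<leftarrow>ls. frac (x l)) = of_int S"
    using sum_list_frac[of "map x ls"] \<open>(\<Sum>l\<leftarrow>ls. x l) = of_int k\<close> by (simp add: S_def o_def)
  have "0 \<le> (\<Sum>l\<leftarrow>ls. frac (x l))"
    by (rule sum_list_nonneg) auto
  then have "0 \<le> S"
    using frac_sum by simp
  have "(\<Sum>l\<leftarrow>ls. frac (x l)) < of_nat (length ls)"
    using sum_list_frac_less_length[of "map x ls"] \<open>ls \<noteq> []\<close> by (simp add: o_def)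
  then have "S < int (length ls)"
    using frac_sum by (metis of_int_less_iff of_int_of_nat_eq)
  have "S \<noteq> 0"
  proof
    assume "S = 0"
    then have "(\<Sum>l\<leftarrow>ls. frac (x l)) = 0"
      using frac_sum by simp
    then have "\<forall>l\<in>set ls. x l \<in> \<int>"
      by (subst (asm) sum_list_nonneg_eq_0_iff) (auto simp: frac_ge_0)
    then have "int h dvd k"
      using dvd_if_scaled_weights_in_Ints[OF assms(1) \<open>h > 0\<close>, where 'a = 'a] unfolding x_def by blast
    then show False
      using assms(3,4) zdvd_imp_le by fastforce
  qed
  with \<open>0 \<le> S\<close> have "0 < S"
    by simp
  then show ?thesis
    using frac_sum \<open>S < int (length ls)\<close> unfolding x_def by blast
qed

theorem lemma2p3:
  fixes l1 l2 l3 l4 :: nat and h :: nat and k :: int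
  assumes "gcd (gcd l1 l2) (gcd l3 l4) = 1"
    and "h = l1 + l2 + l3 + l4"
    and "2 \<le> k" and "k \<le> int h - 2"
  shows "frac (of_int k * of_nat l1 / of_nat h :: rat)
       + frac (of_int k * of_nat l2 / of_nat h)
       + frac (of_int k * of_nat l3 / of_nat h)
       + frac (of_int k * of_nat l4 / of_nat h) \<in> {1, 2, 3}"
proof -
  have "Gcd (set [l1, l2, l3, l4]) = 1"
    using assms(1) by (simp add: ac_simps)
  moreover have "h = sum_list [l1, l2, l3, l4]"
    using assms(2) by simp
  ultimately have "\<exists>S. (\<Sum>l\<leftarrow>[l1, l2, l3, l4]. frac (of_int k * of_nat l / of_nat h :: rat))
      = of_int S \<and> 0 < S \<and> S < int (length [l1, l2, l3, l4])"
    using assms(3,4) by (intro sum_list_frac_scaled_weights) simp_all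
  then obtain S :: int
    where "(\<Sum>l\<leftarrow>[l1, l2, l3, l4]. frac (of_int k * of_nat l / of_nat h :: rat)) = of_int S"
      and "0 < S" and "S < 4"
    by auto
  moreover have "S = 1 \<or> S = 2 \<or> S = 3"
    using \<open>0 < S\<close> \<open>S < 4\<close> by linarith
  ultimately show ?thesis
    by (auto simp: add.assoc)
qed

end
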